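(* For $0<\Delta<2$ let $\gamma_1(\theta)=(\cos\theta,\sin\theta,0)$ and $\gamma_2(\phi)=(\cos\phi+\Delta,0,\sin\phi)$, $\theta,\phi\in[0,2\pi)$; these two unit circles form a Hopf link. Their Möbius cross-energy $$E_c(\Delta)=2\int_0^{2\pi}\!\!\int_0^{2\pi}\frac{d\theta\,d\phi}{(\cos\theta+\Delta-\cos\phi)^2+\sin^2\phi+\sin^2\theta}$$ satisfies $$E_c(\Delta)=\frac{16\pi}{4-\Delta^2}\,K\!\left(-\frac{8(\Delta^2-2)}{(\Delta^2-4)^2}\right),$$ where $K(m)=\int_0^{\pi/2}(1-m\sin^2 t)^{-1/2}\,dt$ (the argument is $<1$ for all $\Delta\in(0,2)$). Moreover, $E_c$ attains its minimum over $(0,2)$ at $\Delta=\sqrt2$, with $E_c(\sqrt2)=4\pi^2$.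
   Context: The Möbius cross-energy of two disjoint closed curves $\gamma_i,\gamma_j$ in $\mathbb R^3$ is taken with the convention that each pair of line elements is counted twice: $E_c=2\int\int \frac{|\dot\gamma_i(u)||\dot\gamma_j(v)|}{|\gamma_i(u)-\gamma_j(v)|^2}\,du\,dv$. The integral displayed in the claim is this quantity for the two curves given. *)

theory Defs
  imports "HOL-Analysis.Analysis"
begin

definition ellipK :: "real \<Rightarrow> real" where
  "ellipK m = integral {0..pi/2} (\<lambda>t. 1 / sqrt (1 - m * (sin t)\<^sup>2))"

definition hopf_integrand :: "real \<Rightarrow> real \<times> real \<Rightarrow> real" where
  "hopf_integrand D = (\<lambda>(\<theta>, \<phi>).
     1 / ((cos \<theta> + D - cos \<phi>)\<^sup>2 + (sin \<phi>)\<^sup>2 + (sin \<theta>)\<^sup>2))"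

definition cross_energy :: "real \<Rightarrow> real" where
  "cross_energy D = 2 * integral ({0..2*pi} \<times> {0..2*pi}) (hopf_integrand D)"

end

theory Submission
  imports Defs
begin

(* Integrating out phi with the Poisson integral of 1/(A - B cos phi), which is
   2 pi / sqrt(A^2 - B^2), leaves a single integral over theta; by symmetry it becomes an integral
   of a function of sin t over [-pi/2, pi/2]. The Moebius substitution
   sin t = (2 sin y - D)/(2 - D sin y) turns it into a complete elliptic integral:
   E_c(D) = 8 pi K(k^2) with k = 1 - D^2/2. Gauss's substitution
   sin t = (1 + k) sin y / (1 + k sin^2 y) proves Landen's transformation
   K(4k/(1+k)^2) = (1 + k) K(k^2), which gives the stated closed form. Since K(m) >= K(0) = pi/2
   for 0 <= m < 1, the minimum 4 pi^2 is attained at k = 0, i.e. at D = sqrt 2. *)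

section \<open>Trigonometric integrals and substitutions\<close>

(* Unlike the primitive obtained from tan (x/2), this one has no jump at x = pi. *)
lemma poisson_kernel_primitive:
  fixes r x :: real
  assumes "\<bar>r\<bar> < 1"
  shows "((\<lambda>x. x + 2 * arctan (r * sin x / (1 - r * cos x))) has_real_derivative
           (1 - r\<^sup>2) / (1 - 2 * r * cos x + r\<^sup>2)) (at x)"
proof -
  have "\<bar>r * cos x\<bar> \<le> \<bar>r\<bar>"
    by (simp add: abs_mult mult_left_le)
  then have nonzero: "1 - r * cos x \<noteq> 0"
    using assms by linarith
  have sum_sq: "(1 - r * cos x)\<^sup>2 + (r * sin x)\<^sup>2 = 1 - 2 * r * cos x + r\<^sup>2"
    using sin_cos_squared_add[of x] by algebra
  then have "0 < 1 - 2 * r * cos x + r\<^sup>2"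
    using nonzero by (metis add_pos_nonneg zero_le_power2 zero_less_power2)
  moreover have "inverse (1 + (r * sin x / (1 - r * cos x))\<^sup>2)
      = (1 - r * cos x)\<^sup>2 / (1 - 2 * r * cos x + r\<^sup>2)"
    using nonzero sum_sq by (simp add: field_simps power_divide)
  moreover have "cos x * r * (1 - r * cos x) - r * sin x * (sin x * r) = r * cos x - r\<^sup>2"
    using sin_cos_squared_add[of x] by algebra
  ultimately show ?thesis
    using nonzero
    by (auto intro!: derivative_eq_intros simp: power2_eq_square[symmetric]) (simp add: field_simps)
qed

lemma poisson_kernel_has_integral:
  fixes r :: real
  assumes "\<bar>r\<bar> < 1"
  shows "((\<lambda>x. (1 - r\<^sup>2) / (1 - 2 * r * cos x + r\<^sup>2)) has_integral 2 * pi) {0..2 * pi}"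
proof -
  have "((\<lambda>x. (1 - r\<^sup>2) / (1 - 2 * r * cos x + r\<^sup>2)) has_integral
          (2 * pi + 2 * arctan (r * sin (2 * pi) / (1 - r * cos (2 * pi))))
          - (0 + 2 * arctan (r * sin 0 / (1 - r * cos 0)))) {0..2 * pi}"
    using poisson_kernel_primitive[OF assms]
    by (intro fundamental_theorem_of_calculus)
       (auto simp: has_real_derivative_iff_has_vector_derivative has_vector_derivative_at_within)
  then show ?thesis by simp
qed

lemma has_integral_inverse_const_minus_cos:
  fixes A B :: real
  assumes "\<bar>B\<bar> < A"
  shows "((\<lambda>x. 1 / (A - B * cos x)) has_integral 2 * pi / sqrt (A\<^sup>2 - B\<^sup>2)) {0..2 * pi}"
proof -
  define w where "w = sqrt (A\<^sup>2 - B\<^sup>2)"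
  (* With this r, A - B cos x is w / (1 - r^2) times the Poisson denominator 1 - 2 r cos x + r^2. *)
  define r where "r = B / (A + w)"
  have "B\<^sup>2 < A\<^sup>2"
    using assms abs_le_square_iff[of A B] by auto
  then have w: "w > 0" "w\<^sup>2 = A\<^sup>2 - B\<^sup>2"
    by (simp_all add: w_def)
  have Aw: "A + w > 0" using assms w by linarith
  have B_eq: "B = r * (A + w)"
    using Aw by (simp add: r_def)
  have r2_eq: "r\<^sup>2 * (A + w) = A - w"
  proof -
    have "r\<^sup>2 * (A + w) * (A + w) = (A - w) * (A + w)"
      using w(2) B_eq by algebra
    then show ?thesis using Aw by simp
  qed
  have r: "\<bar>r\<bar> < 1"
    using assms w Aw by (simp add: r_def abs_divide divide_less_eq)
  have "1 / (A - B * cos x) = (1 - r\<^sup>2) / (1 - 2 * r * cos x + r\<^sup>2) / w" for x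
  proof -
    have key: "(1 - r\<^sup>2) * (A - B * cos x) = w * (1 - 2 * r * cos x + r\<^sup>2)"
      using B_eq r2_eq by algebra
    have "\<bar>B * cos x\<bar> \<le> \<bar>B\<bar>"
      by (simp add: abs_mult mult_left_le)
    then have "0 < A - B * cos x"
      using assms by linarith
    moreover have "0 < 1 - r\<^sup>2"
      using r by (simp add: abs_square_less_1)
    ultimately have "0 < 1 - 2 * r * cos x + r\<^sup>2"
      using key w(1) by (metis mult_pos_pos zero_less_mult_pos)
    then show ?thesis
      using key w(1) \<open>0 < A - B * cos x\<close> by (simp add: divide_simps)
  qed
  moreover have "((\<lambda>x. (1 - r\<^sup>2) / (1 - 2 * r * cos x + r\<^sup>2) / w) has_integral 2 * pi / w)
      {0..2 * pi}"
    using poisson_kernel_has_integral[OF r] by (rule has_integral_divide)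
  ultimately show ?thesis by (simp add: w_def)
qed

lemma integral_even_symmetric:
  fixes f :: "real \<Rightarrow> real"
  assumes "0 \<le> a" and "continuous_on {-a..a} f" and "\<And>x. f (- x) = f x"
  shows "integral {-a..a} f = 2 * integral {0..a} f"
proof -
  have "integral {-a..0} f = integral {0..a} f"
    using Henstock_Kurzweil_Integration.integral_reflect_real[of a 0 f] assms(3) by simp
  moreover have "integral {-a..0} f + integral {0..a} f = integral {-a..a} f"
    using assms
      by (intro Henstock_Kurzweil_Integration.integral_combine integrable_continuous_interval) auto
  ultimately show ?thesis by simp
qed

lemma integral_cos_period_eq_sin:
  fixes G :: "real \<Rightarrow> real"
  assumes "continuous_on {-1..1} G"
  shows "integral {0..2 * pi} (\<lambda>t. G (cos t)) = 2 * integral {-(pi/2)..pi/2} (\<lambda>t. G (sin t))"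
proof -
  have cont: "continuous_on S (\<lambda>t. G (cos t))" for S
    by (intro continuous_on_compose2[OF assms] continuous_intros) auto
  have "integral {pi..2 * pi} (\<lambda>t. G (cos t)) = integral {-pi..0} (\<lambda>t. G (cos (t + 2 * pi)))"
    using integral_shift_real_ivl[of pi "2 * pi" "2 * pi" "\<lambda>t. G (cos t)"] by simp
  also have "\<dots> = integral {-pi..-0} (\<lambda>t. G (cos (- t)))"
    by simp
  also have "\<dots> = integral {0..pi} (\<lambda>t. G (cos t))"
    by (rule Henstock_Kurzweil_Integration.integral_reflect_real)
  finally have second_half:
      "integral {pi..2 * pi} (\<lambda>t. G (cos t)) = integral {0..pi} (\<lambda>t. G (cos t))" .
  have "integral {0..pi} (\<lambda>t. G (cos t)) = integral {-(pi/2)..pi/2} (\<lambda>t. G (cos (t + pi/2)))"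
    using integral_shift_real_ivl[of 0 "pi/2" pi "\<lambda>t. G (cos t)"] by simp
  also have "\<dots> = integral {-(pi/2)..pi/2} (\<lambda>t. G (- sin t))"
    by (simp add: cos_add)
  also have "\<dots> = integral {-(pi/2)..-(-(pi/2))} (\<lambda>t. G (sin (- t)))"
    by simp
  also have "\<dots> = integral {-(pi/2)..pi/2} (\<lambda>t. G (sin t))"
    by (rule Henstock_Kurzweil_Integration.integral_reflect_real)
  finally have first_half:
      "integral {0..pi} (\<lambda>t. G (cos t)) = integral {-(pi/2)..pi/2} (\<lambda>t. G (sin t))" .
  have "integral {0..pi} (\<lambda>t. G (cos t)) + integral {pi..2 * pi} (\<lambda>t. G (cos t))
        = integral {0..2 * pi} (\<lambda>t. G (cos t))"
    by (intro Henstock_Kurzweil_Integration.integral_combine integrable_continuous_interval cont)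
       auto
  then show ?thesis using first_half second_half by simp
qed

(* The substitution sin t = psi y; sigma y stands for cos t = sqrt (1 - psi y ^ 2) and is passed
   explicitly so that the Jacobian psi' / sigma can be simplified by the caller. *)
lemma has_integral_arcsin_substitution:
  fixes \<psi> \<psi>' \<sigma> G f :: "real \<Rightarrow> real"
  assumes "a \<le> b" and "\<psi> a \<le> \<psi> b" and "continuous_on {a..b} \<psi>"
    and "\<And>y. y \<in> {a..b} \<Longrightarrow> 1 - (\<psi> y)\<^sup>2 = (\<sigma> y)\<^sup>2"
    and "\<And>y. y \<in> {a<..<b} \<Longrightarrow> 0 < \<sigma> y"
    and "\<And>y. y \<in> {a<..<b} \<Longrightarrow> (\<psi> has_real_derivative \<psi>' y) (at y)"
    and "continuous_on {-1..1} G"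
    and "\<And>y. y \<in> {a<..<b} \<Longrightarrow> f y = \<psi>' y / \<sigma> y * G (\<psi> y)"
  shows "(f has_integral integral {arcsin (\<psi> a)..arcsin (\<psi> b)} (\<lambda>t. G (sin t))) {a..b}"
proof -
  have range: "\<bar>\<psi> y\<bar> \<le> 1" if "y \<in> {a..b}" for y
    using assms(4)[OF that] abs_square_le_1[of "\<psi> y"] by (metis diff_ge_0_iff_ge zero_le_power2)
  have interior: "\<bar>\<psi> y\<bar> < 1" "sqrt (1 - (\<psi> y)\<^sup>2) = \<sigma> y" if "y \<in> {a<..<b}" for y
  proof -
    have "0 < 1 - (\<psi> y)\<^sup>2"
      using assms(4,5)[of y] that by simp
    then show "\<bar>\<psi> y\<bar> < 1"
      by (simp add: abs_square_less_1[symmetric])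
    show "sqrt (1 - (\<psi> y)\<^sup>2) = \<sigma> y"
      using assms(4,5)[of y] that by simp
  qed
  have "((\<lambda>y. (\<psi>' y / \<sigma> y) *\<^sub>R G (sin (arcsin (\<psi> y)))) has_integral
          integral {arcsin (\<psi> a)..arcsin (\<psi> b)} (\<lambda>t. G (sin t))) {a..b}"
  proof (rule has_integral_substitution_strong[where s = "{a, b}" and c = "-(pi/2)" and d = "pi/2"])
    show "arcsin (\<psi> a) \<le> arcsin (\<psi> b)"
      using assms(1,2) range by (intro arcsin_le_arcsin) (auto simp: abs_le_iff)
    show "(\<lambda>y. arcsin (\<psi> y)) ` {a..b} \<subseteq> {-(pi/2)..pi/2}"
      using range arcsin_bounded by (fastforce simp: abs_le_iff)
    show "continuous_on {-(pi/2)..pi/2} (\<lambda>t. G (sin t))"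
      by (intro continuous_on_compose2[OF assms(7)] continuous_intros) auto
    show "continuous_on {a..b} (\<lambda>y. arcsin (\<psi> y))"
      using assms(3) range
      by (intro continuous_on_compose2[OF continuous_on_arcsin']) (auto simp: abs_le_iff)
    show "((\<lambda>y. arcsin (\<psi> y)) has_real_derivative \<psi>' y / \<sigma> y) (at y within {a..b})"
      if "y \<in> {a..b} - {a, b}" for y
    proof -
      have y: "y \<in> {a<..<b}" using that by auto
      then have "((\<lambda>y. arcsin (\<psi> y)) has_real_derivative inverse (sqrt (1 - (\<psi> y)\<^sup>2)) * \<psi>' y) (at y)"
        using interior(1)
          by (intro DERIV_chain2[OF DERIV_arcsin assms(6)]) (auto simp: abs_less_iff)
      then show ?thesis
        using interior(2)[OF y]
          by (simp add: has_field_derivative_at_within divide_inverse mult.commute)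
    qed
  qed (use assms(1) in auto)
  then show ?thesis
    by (rule has_integral_spike_finite[of "{a, b}", rotated 2])
       (use assms(8) range in \<open>auto simp: abs_le_iff\<close>)
qed

section \<open>The complete elliptic integral and Landen's transformation\<close>

lemma ellipK_radicand_pos:
  fixes m c :: real
  assumes "m < 1" and "\<bar>c\<bar> \<le> 1"
  shows "0 < 1 - m * c\<^sup>2"
proof -
  have "m * c\<^sup>2 \<le> max m 0"
    using assms(2) abs_square_le_1[of c]
      by (cases "m \<ge> 0") (auto simp: mult_left_le mult_nonpos_nonneg)
  then show ?thesis using assms by linarith
qed

lemma continuous_on_ellipK_integrand:
  fixes m :: real
  assumes "m < 1"
  shows "continuous_on S (\<lambda>t. 1 / sqrt (1 - m * (sin t)\<^sup>2))"
  using ellipK_radicand_pos[OF assms abs_sin_le_one]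
    by (intro continuous_intros) (auto simp: less_imp_neq[symmetric])

lemma integral_symmetric_eq_ellipK:
  fixes m :: real
  assumes "m < 1"
  shows "integral {-(pi/2)..pi/2} (\<lambda>t. 1 / sqrt (1 - m * (sin t)\<^sup>2)) = 2 * ellipK m"
  unfolding ellipK_def
  by (rule integral_even_symmetric) (auto intro: continuous_on_ellipK_integrand[OF assms])

lemma ellipK_zero: "ellipK 0 = pi / 2"
  by (simp add: ellipK_def)

lemma ellipK_ge_pi_half:
  fixes m :: real
  assumes "0 \<le> m" and "m < 1"
  shows "pi / 2 \<le> ellipK m"
proof -
  have "1 \<le> 1 / sqrt (1 - m * (sin t)\<^sup>2)" for t
    using ellipK_radicand_pos[OF assms(2) abs_sin_le_one, of t] assms(1)
      by (simp add: le_divide_eq real_sqrt_le_1_iff)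
  then have "integral {0..pi/2} (\<lambda>t. 1) \<le> ellipK m"
    unfolding ellipK_def
    by (intro integral_le integrable_continuous_interval continuous_on_ellipK_integrand assms) auto
  then show ?thesis by simp
qed

lemma landen_parameter_less_one:
  fixes k :: real
  assumes "\<bar>k\<bar> < 1"
  shows "4 * k / (1 + k)\<^sup>2 < 1"
proof -
  have "0 < (1 - k)\<^sup>2" "0 < (1 + k)\<^sup>2" using assms by auto
  moreover have "(1 + k)\<^sup>2 = 4 * k + (1 - k)\<^sup>2" by algebra
  ultimately show ?thesis by (simp add: divide_less_eq)
qed

definition landen_map :: "real \<Rightarrow> real \<Rightarrow> real" where
  "landen_map k y = (1 + k) * sin y / (1 + k * (sin y)\<^sup>2)"

lemma landen_denominators_pos:
  fixes k y :: real
  assumes "\<bar>k\<bar> < 1"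
  shows "0 < 1 + k * (sin y)\<^sup>2" and "0 < 1 - k * (sin y)\<^sup>2" and "0 < 1 - k\<^sup>2 * (sin y)\<^sup>2"
proof -
  have "\<bar>k * (sin y)\<^sup>2\<bar> < 1"
    using assms abs_square_le_1[of "sin y"]
      by (simp add: abs_mult) (meson abs_ge_zero mult_left_le order.strict_trans1)
  then show "0 < 1 + k * (sin y)\<^sup>2" "0 < 1 - k * (sin y)\<^sup>2"
    by (auto simp: abs_less_iff)
  have "\<bar>k\<^sup>2\<bar> < 1" using assms by (simp add: abs_square_less_1)
  then show "0 < 1 - k\<^sup>2 * (sin y)\<^sup>2"
    using ellipK_radicand_pos[OF _ abs_sin_le_one] by (simp add: abs_less_iff)
qed

lemma one_minus_landen_map_sq:
  fixes k y :: real
  assumes "\<bar>k\<bar> < 1"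
  shows "1 - (landen_map k y)\<^sup>2 = (cos y * sqrt (1 - k\<^sup>2 * (sin y)\<^sup>2) / (1 + k * (sin y)\<^sup>2))\<^sup>2"
  using landen_denominators_pos[OF assms, of y] unfolding landen_map_def
  by (simp add: power_divide power_mult_distrib field_simps cos_squared_eq) algebra

lemma landen_map_has_derivative:
  fixes k y :: real
  assumes "\<bar>k\<bar> < 1"
  shows "(landen_map k has_real_derivative
           (1 + k) * cos y * (1 - k * (sin y)\<^sup>2) / (1 + k * (sin y)\<^sup>2)\<^sup>2) (at y)"
  unfolding landen_map_def[abs_def] using landen_denominators_pos(1)[OF assms, of y]
  by (auto intro!: derivative_eq_intros simp: field_simps power2_eq_square cos_squared_eq)

lemma ellipK_integrand_landen_map:
  fixes k y :: real
  assumes "\<bar>k\<bar> < 1"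
  shows "1 / sqrt (1 - 4 * k / (1 + k)\<^sup>2 * (landen_map k y)\<^sup>2)
           = (1 + k * (sin y)\<^sup>2) / (1 - k * (sin y)\<^sup>2)"
proof -
  have "1 - 4 * k / (1 + k)\<^sup>2 * (landen_map k y)\<^sup>2 = ((1 - k * (sin y)\<^sup>2) / (1 + k * (sin y)\<^sup>2))\<^sup>2"
    using assms landen_denominators_pos(1)[OF assms, of y] unfolding landen_map_def
    by (simp add: power_divide power_mult_distrib field_simps) algebra
  then show ?thesis
    using landen_denominators_pos[OF assms, of y] by simp
qed

lemma landen_substitution_factor:
  fixes k y :: real
  assumes k: "\<bar>k\<bar> < 1" and "0 < cos y"
  shows "(1 + k) * cos y * (1 - k * (sin y)\<^sup>2) / (1 + k * (sin y)\<^sup>2)\<^sup>2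
           / (cos y * sqrt (1 - k\<^sup>2 * (sin y)\<^sup>2) / (1 + k * (sin y)\<^sup>2))
           * (1 / sqrt (1 - 4 * k / (1 + k)\<^sup>2 * (landen_map k y)\<^sup>2))
         = (1 + k) * (1 / sqrt (1 - k\<^sup>2 * (sin y)\<^sup>2))"
proof -
  have cancel: "(1 + k) * C * M / N\<^sup>2 / (C * Q / N) * (N / M) = (1 + k) * (1 / Q)"
    if "C > 0" "Q > 0" "N > 0" "M > 0" for C Q N M :: real
    using that by (simp add: field_simps power2_eq_square)
  show ?thesis
    unfolding ellipK_integrand_landen_map[OF k]
    by (rule cancel) (use \<open>0 < cos y\<close> landen_denominators_pos[OF k, of y] in simp_all)
qed

lemma ellipK_landen:
  fixes k :: real
  assumes k: "\<bar>k\<bar> < 1"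
  shows "ellipK (4 * k / (1 + k)\<^sup>2) = (1 + k) * ellipK (k\<^sup>2)"
proof -
  define m where "m = 4 * k / (1 + k)\<^sup>2"
  have "((\<lambda>y. (1 + k) * (1 / sqrt (1 - k\<^sup>2 * (sin y)\<^sup>2))) has_integral
          integral {arcsin (landen_map k 0)..arcsin (landen_map k (pi/2))}
            (\<lambda>t. 1 / sqrt (1 - m * (sin t)\<^sup>2)))
        {0..pi/2}"
  proof (rule has_integral_arcsin_substitution[OF _ _ _ one_minus_landen_map_sq[OF k] _
        landen_map_has_derivative[OF k]])
    show "continuous_on {0..pi/2} (landen_map k)"
      unfolding landen_map_def using landen_denominators_pos(1)[OF k]
      by (intro continuous_intros) (auto simp: less_imp_neq[symmetric])
    show "0 < cos y * sqrt (1 - k\<^sup>2 * (sin y)\<^sup>2) / (1 + k * (sin y)\<^sup>2)" if "y \<in> {0<..<pi/2}" for y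
    proof -
      have "0 < cos y" using that by (auto intro: cos_gt_zero)
      then show ?thesis using landen_denominators_pos[OF k, of y] by simp
    qed
    show "continuous_on {-1..1} (\<lambda>c. 1 / sqrt (1 - m * c\<^sup>2))"
      using ellipK_radicand_pos[OF landen_parameter_less_one[OF k, folded m_def]]
      by (intro continuous_intros) (force simp: abs_le_iff)+
    show "(1 + k) * (1 / sqrt (1 - k\<^sup>2 * (sin y)\<^sup>2)) =
        (1 + k) * cos y * (1 - k * (sin y)\<^sup>2) / (1 + k * (sin y)\<^sup>2)\<^sup>2
        / (cos y * sqrt (1 - k\<^sup>2 * (sin y)\<^sup>2) / (1 + k * (sin y)\<^sup>2))
        * (1 / sqrt (1 - m * (landen_map k y)\<^sup>2))" if "y \<in> {0<..<pi/2}" for y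
      unfolding m_def using that
      by (intro landen_substitution_factor[OF k cos_gt_zero, symmetric]) auto
  qed (use k in \<open>auto simp: landen_map_def\<close>)
  moreover have "arcsin (landen_map k 0) = 0" "arcsin (landen_map k (pi/2)) = pi/2"
    using k by (auto simp: landen_map_def)
  ultimately have "((\<lambda>y. (1 + k) * (1 / sqrt (1 - k\<^sup>2 * (sin y)\<^sup>2))) has_integral ellipK m) {0..pi/2}"
    unfolding ellipK_def by simp
  then have "ellipK m = integral {0..pi/2} (\<lambda>y. (1 + k) * (1 / sqrt (1 - k\<^sup>2 * (sin y)\<^sup>2)))"
    by (rule integral_unique[symmetric])
  also have "\<dots> = (1 + k) * ellipK (k\<^sup>2)"
    unfolding ellipK_def by (rule integral_mult_right)
  finally show ?thesis
    unfolding m_def .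
qed

section \<open>The cross-energy of the Hopf link\<close>

lemma hopf_denominator_eq:
  fixes D \<theta> \<phi> :: real
  shows "(cos \<theta> + D - cos \<phi>)\<^sup>2 + (sin \<phi>)\<^sup>2 + (sin \<theta>)\<^sup>2
           = (D\<^sup>2 + 2 + 2 * D * cos \<theta>) - 2 * (cos \<theta> + D) * cos \<phi>"
proof -
  have "(cos \<theta> + D - cos \<phi>)\<^sup>2 + (sin \<phi>)\<^sup>2 + (sin \<theta>)\<^sup>2
      = (D\<^sup>2 + 2 + 2 * D * cos \<theta>) - 2 * (cos \<theta> + D) * cos \<phi>
        + ((sin \<phi>)\<^sup>2 + (cos \<phi>)\<^sup>2 - 1) + ((sin \<theta>)\<^sup>2 + (cos \<theta>)\<^sup>2 - 1)"
    by algebra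
  then show ?thesis by simp
qed

lemma hopf_coefficient_bound:
  fixes D c :: real
  assumes "0 < D" "D < 2" and "\<bar>c\<bar> \<le> 1"
  shows "\<bar>2 * (c + D)\<bar> < D\<^sup>2 + 2 + 2 * D * c"
proof -
  (* The two sums of squares are the denominator of the integrand at phi = 0 and at phi = pi. *)
  consider "c\<^sup>2 < 1" | "c = 1" | "c = -1"
    using assms(3) unfolding abs_square_less_1 abs_less_iff abs_le_iff
      by (cases "c = 1"; cases "c = -1") auto
  then have "0 < (c + D - 1)\<^sup>2 + (1 - c\<^sup>2) \<and> 0 < (c + D + 1)\<^sup>2 + (1 - c\<^sup>2)"
    by cases (use assms in \<open>simp_all add: add_nonneg_pos\<close>)
  then show ?thesis by (simp add: abs_less_iff power2_eq_square algebra_simps)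
qed

lemma continuous_hopf_integrand:
  fixes D :: real
  assumes "0 < D" "D < 2"
  shows "continuous_on UNIV (hopf_integrand D)"
proof -
  have "0 < (D\<^sup>2 + 2 + 2 * D * cos \<theta>) - 2 * (cos \<theta> + D) * cos \<phi>" for \<theta> \<phi>
  proof -
    have "\<bar>2 * (cos \<theta> + D) * cos \<phi>\<bar> \<le> \<bar>2 * (cos \<theta> + D)\<bar>"
      by (simp add: abs_mult mult_left_le)
    then show ?thesis using hopf_coefficient_bound[OF assms abs_cos_le_one, of \<theta>] by linarith
  qed
  then have "continuous_on UNIV
      (\<lambda>z. 1 / ((cos (fst z) + D - cos (snd z))\<^sup>2 + (sin (snd z))\<^sup>2 + (sin (fst z))\<^sup>2))"
    unfolding hopf_denominator_eq by (intro continuous_intros) (auto simp: less_imp_neq[symmetric])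
  then show ?thesis by (simp add: hopf_integrand_def case_prod_unfold)
qed

lemma hopf_integrand_integrable:
  fixes D :: real
  assumes "0 < D" "D < 2"
  shows "hopf_integrand D integrable_on ({0..2 * pi} \<times> {0..2 * pi})"
proof -
  have "hopf_integrand D integrable_on cbox (0, 0) (2 * pi, 2 * pi)"
    by (intro integrable_continuous continuous_on_subset[OF continuous_hopf_integrand[OF assms]])
       simp
  then show ?thesis by (simp add: cbox_Pair_eq)
qed

definition hopf_reduced_integrand :: "real \<Rightarrow> real \<Rightarrow> real" where
  "hopf_reduced_integrand D c = 1 / sqrt ((D\<^sup>2 + 2 + 2 * D * c)\<^sup>2 - (2 * (c + D))\<^sup>2)"

lemma hopf_inner_has_integral:
  fixes D \<theta> :: real
  assumes "0 < D" "D < 2"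
  shows "((\<lambda>\<phi>. hopf_integrand D (\<theta>, \<phi>)) has_integral 2 * pi * hopf_reduced_integrand D (cos \<theta>))
           {0..2 * pi}"
  using has_integral_inverse_const_minus_cos[OF hopf_coefficient_bound[OF assms abs_cos_le_one]]
  by (simp add: hopf_integrand_def hopf_denominator_eq hopf_reduced_integrand_def)

lemma hopf_reduced_radicand_pos:
  fixes D c :: real
  assumes "0 < D" "D < 2" and "\<bar>c\<bar> \<le> 1"
  shows "0 < (D\<^sup>2 + 2 + 2 * D * c)\<^sup>2 - (2 * (c + D))\<^sup>2"
  using hopf_coefficient_bound[OF assms] abs_le_square_iff[of "D\<^sup>2 + 2 + 2 * D * c" "2 * (c + D)"]
  by auto

lemma continuous_on_hopf_reduced_integrand:
  fixes D :: real
  assumes "0 < D" "D < 2"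
  shows "continuous_on {-1..1} (hopf_reduced_integrand D)"
  unfolding hopf_reduced_integrand_def
  using hopf_reduced_radicand_pos[OF assms] by (intro continuous_intros) (force simp: abs_le_iff)+

lemma cross_energy_eq_integral_reduced:
  fixes D :: real
  assumes "0 < D" "D < 2"
  shows "cross_energy D = 8 * pi * integral {-(pi/2)..pi/2} (\<lambda>t. hopf_reduced_integrand D (sin t))"
proof -
  have "integral ({0..2 * pi} \<times> {0..2 * pi}) (hopf_integrand D)
      = integral {0..2 * pi} (\<lambda>\<theta>. integral {0..2 * pi} (\<lambda>\<phi>. hopf_integrand D (\<theta>, \<phi>)))"
    using integral_prod_continuous[OF continuous_on_subset[OF continuous_hopf_integrand[OF assms]],
        of 0 0 "2 * pi" "2 * pi"]
    by (simp add: cbox_Pair_eq)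
  also have "\<dots> = integral {0..2 * pi} (\<lambda>\<theta>. 2 * pi * hopf_reduced_integrand D (cos \<theta>))"
    using hopf_inner_has_integral[OF assms] by (intro integral_cong integral_unique)
  also have "\<dots> = 4 * pi * integral {-(pi/2)..pi/2} (\<lambda>t. hopf_reduced_integrand D (sin t))"
    using integral_cos_period_eq_sin[OF continuous_on_hopf_reduced_integrand[OF assms]] by simp
  finally show ?thesis by (simp add: cross_energy_def)
qed

definition hopf_moebius_map :: "real \<Rightarrow> real \<Rightarrow> real" where
  "hopf_moebius_map D y = (2 * sin y - D) / (2 - D * sin y)"

lemma hopf_moebius_denominator_pos:
  fixes D y :: real
  assumes "0 < D" "D < 2"
  shows "0 < 2 - D * sin y"
proof -
  have "D * sin y \<le> D" using assms(1) by (simp add: mult_left_le)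
  then show ?thesis using assms(2) by linarith
qed

lemma one_minus_hopf_moebius_map_sq:
  fixes D y :: real
  assumes "0 < D" "D < 2"
  shows "1 - (hopf_moebius_map D y)\<^sup>2 = (sqrt (4 - D\<^sup>2) * cos y / (2 - D * sin y))\<^sup>2"
proof -
  have "D\<^sup>2 < 4" using assms by (simp add: power_strict_mono[of D 2 2, simplified])
  then show ?thesis
    using hopf_moebius_denominator_pos[OF assms, of y] unfolding hopf_moebius_map_def
    by (simp add: power_divide power_mult_distrib field_simps cos_squared_eq) algebra
qed

lemma hopf_moebius_map_has_derivative:
  fixes D y :: real
  assumes "0 < D" "D < 2"
  shows "(hopf_moebius_map D has_real_derivative (4 - D\<^sup>2) * cos y / (2 - D * sin y)\<^sup>2) (at y)"
  unfolding hopf_moebius_map_def[abs_def] using hopf_moebius_denominator_pos[OF assms, of y]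
  by (auto intro!: derivative_eq_intros simp: field_simps power2_eq_square cos_squared_eq)

lemma hopf_reduced_integrand_moebius_map:
  fixes D y :: real
  assumes "0 < D" "D < 2"
  shows "hopf_reduced_integrand D (hopf_moebius_map D y)
           = (2 - D * sin y) / (2 * sqrt (4 - D\<^sup>2) * sqrt (1 - (1 - D\<^sup>2 / 2)\<^sup>2 * (sin y)\<^sup>2))"
proof -
  have "(D\<^sup>2 + 2 + 2 * D * hopf_moebius_map D y)\<^sup>2 - (2 * (hopf_moebius_map D y + D))\<^sup>2
      = 4 * (4 - D\<^sup>2) * (1 - (1 - D\<^sup>2 / 2)\<^sup>2 * (sin y)\<^sup>2) / (2 - D * sin y)\<^sup>2"
    using hopf_moebius_denominator_pos[OF assms, of y] unfolding hopf_moebius_map_def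
    by (simp add: power_divide field_simps) algebra
  then show ?thesis
    using hopf_moebius_denominator_pos[OF assms, of y]
    by (simp only: hopf_reduced_integrand_def real_sqrt_mult real_sqrt_divide real_sqrt_abs
        real_sqrt_four) simp
qed

lemma hopf_modulus_bound:
  fixes D :: real
  assumes "0 < D" "D < 2"
  shows "\<bar>1 - D\<^sup>2 / 2\<bar> < 1"
proof -
  have "0 < D\<^sup>2" "D\<^sup>2 < 4"
    using assms by (simp_all add: power_strict_mono[of D 2 2, simplified])
  then show ?thesis unfolding abs_less_iff by linarith
qed

lemma hopf_moebius_substitution_factor:
  fixes D y :: real
  assumes D: "0 < D" "D < 2" and "0 < cos y"
  shows "(4 - D\<^sup>2) * cos y / (2 - D * sin y)\<^sup>2 / (sqrt (4 - D\<^sup>2) * cos y / (2 - D * sin y))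
           * hopf_reduced_integrand D (hopf_moebius_map D y)
         = 1 / 2 * (1 / sqrt (1 - (1 - D\<^sup>2 / 2)\<^sup>2 * (sin y)\<^sup>2))"
proof -
  have cancel: "X * C / N\<^sup>2 / (sqrt X * C / N) * (N / (2 * sqrt X * Q)) = 1 / 2 * (1 / Q)"
    if "X > 0" "C > 0" "N > 0" "Q > 0" for X C N Q :: real
    using that by (simp add: field_simps power2_eq_square)
  have "D\<^sup>2 < 4"
    using D by (simp add: power_strict_mono[of D 2 2, simplified])
  moreover have "(1 - D\<^sup>2 / 2)\<^sup>2 < 1"
    using hopf_modulus_bound[OF D] by (simp add: abs_square_less_1)
  ultimately show ?thesis
    unfolding hopf_reduced_integrand_moebius_map[OF D]
    by (intro cancel) (use \<open>0 < cos y\<close> hopf_moebius_denominator_pos[OF D, of y]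
        ellipK_radicand_pos[OF _ abs_sin_le_one] in simp_all)
qed

lemma integral_hopf_reduced_integrand_eq_ellipK:
  fixes D :: real
  assumes D: "0 < D" "D < 2"
  shows "integral {-(pi/2)..pi/2} (\<lambda>t. hopf_reduced_integrand D (sin t)) = ellipK ((1 - D\<^sup>2 / 2)\<^sup>2)"
proof -
  define q where "q = (1 - D\<^sup>2 / 2)\<^sup>2"
  have "D\<^sup>2 < 4"
    using D by (simp add: power_strict_mono[of D 2 2, simplified])
  have q: "q < 1"
    unfolding q_def using hopf_modulus_bound[OF D] by (simp add: abs_square_less_1)
  have "((\<lambda>y. 1 / 2 * (1 / sqrt (1 - q * (sin y)\<^sup>2))) has_integral
          integral {arcsin (hopf_moebius_map D (-(pi/2)))..arcsin (hopf_moebius_map D (pi/2))}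
            (\<lambda>t. hopf_reduced_integrand D (sin t))) {-(pi/2)..pi/2}"
  proof (rule has_integral_arcsin_substitution[OF _ _ _ one_minus_hopf_moebius_map_sq[OF D] _
        hopf_moebius_map_has_derivative[OF D] continuous_on_hopf_reduced_integrand[OF D]])
    show "continuous_on {-(pi/2)..pi/2} (hopf_moebius_map D)"
      unfolding hopf_moebius_map_def using hopf_moebius_denominator_pos[OF D]
      by (intro continuous_intros) (auto simp: less_imp_neq[symmetric])
    show "0 < sqrt (4 - D\<^sup>2) * cos y / (2 - D * sin y)" if "y \<in> {-(pi/2)<..<pi/2}" for y
    proof -
      have "0 < cos y" using that by (auto intro: cos_gt_zero_pi)
      then show ?thesis using \<open>D\<^sup>2 < 4\<close> hopf_moebius_denominator_pos[OF D, of y] by simp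
    qed
    show "1 / 2 * (1 / sqrt (1 - q * (sin y)\<^sup>2)) =
        (4 - D\<^sup>2) * cos y / (2 - D * sin y)\<^sup>2 / (sqrt (4 - D\<^sup>2) * cos y / (2 - D * sin y))
        * hopf_reduced_integrand D (hopf_moebius_map D y)" if "y \<in> {-(pi/2)<..<pi/2}" for y
      unfolding q_def using that
      by (intro hopf_moebius_substitution_factor[OF D cos_gt_zero_pi, symmetric]) auto
  qed (use D in \<open>auto simp: hopf_moebius_map_def\<close>)
  moreover have "hopf_moebius_map D (-(pi/2)) = -1" "hopf_moebius_map D (pi/2) = 1"
    using D by (simp_all add: hopf_moebius_map_def field_simps)
  ultimately have "integral {-(pi/2)..pi/2} (\<lambda>t. hopf_reduced_integrand D (sin t))
      = integral {-(pi/2)..pi/2} (\<lambda>y. 1 / 2 * (1 / sqrt (1 - q * (sin y)\<^sup>2)))"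
    by (simp add: integral_unique)
  also have "\<dots> = 1 / 2 * (2 * ellipK q)"
    unfolding integral_mult_right integral_symmetric_eq_ellipK[OF q] ..
  also have "\<dots> = ellipK q"
    by simp
  finally show ?thesis unfolding q_def .
qed

lemma cross_energy_eq_ellipK:
  fixes D :: real
  assumes "0 < D" "D < 2"
  shows "cross_energy D = 8 * pi * ellipK ((1 - D\<^sup>2 / 2)\<^sup>2)"
  using cross_energy_eq_integral_reduced[OF assms]
    integral_hopf_reduced_integrand_eq_ellipK[OF assms]
  by simp

lemma hopf_parameter_eq_landen:
  fixes D :: real
  shows "- 8 * (D\<^sup>2 - 2) / (D\<^sup>2 - 4)\<^sup>2 = 4 * (1 - D\<^sup>2 / 2) / (1 + (1 - D\<^sup>2 / 2))\<^sup>2"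
proof -
  have denominator: "(1 + (1 - D\<^sup>2 / 2))\<^sup>2 = (D\<^sup>2 - 4)\<^sup>2 / 4"
    by (simp add: power2_eq_square field_simps)
  have "4 * (1 - D\<^sup>2 / 2) / ((D\<^sup>2 - 4)\<^sup>2 / 4) = - 8 * (D\<^sup>2 - 2) / (D\<^sup>2 - 4)\<^sup>2"
    by (simp add: algebra_simps)
  then show ?thesis
    unfolding denominator by (rule sym)
qed

lemma hopf_parameter_less_one:
  fixes D :: real
  assumes "0 < D" "D < 2"
  shows "- 8 * (D\<^sup>2 - 2) / (D\<^sup>2 - 4)\<^sup>2 < 1"
  unfolding hopf_parameter_eq_landen
  by (rule landen_parameter_less_one[OF hopf_modulus_bound[OF assms]])

lemma cross_energy_closed_form:
  fixes D :: real
  assumes D: "0 < D" "D < 2"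
  shows "cross_energy D = 16 * pi / (4 - D\<^sup>2) * ellipK (- 8 * (D\<^sup>2 - 2) / (D\<^sup>2 - 4)\<^sup>2)"
proof -
  define k where "k = 1 - D\<^sup>2 / 2"
  have k: "\<bar>k\<bar> < 1"
    unfolding k_def using hopf_modulus_bound[OF D] .
  have four_minus: "4 - D\<^sup>2 = 2 * (1 + k)" and "0 < 1 + k"
    using k by (auto simp: k_def)
  show ?thesis
    unfolding hopf_parameter_eq_landen cross_energy_eq_ellipK[OF D] k_def[symmetric]
      ellipK_landen[OF k] four_minus
    using \<open>0 < 1 + k\<close> by (simp add: field_simps)
qed

lemma cross_energy_sqrt_2: "cross_energy (sqrt 2) = 4 * pi\<^sup>2"
proof -
  have "0 < sqrt (2::real)" "sqrt (2::real) < 2"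
    using real_sqrt_less_iff[of 2 4] by auto
  then show ?thesis
    using cross_energy_eq_ellipK by (simp add: ellipK_zero power2_eq_square)
qed

lemma cross_energy_ge_four_pi_sq:
  fixes D :: real
  assumes D: "0 < D" "D < 2"
  shows "4 * pi\<^sup>2 \<le> cross_energy D"
proof -
  have "pi / 2 \<le> ellipK ((1 - D\<^sup>2 / 2)\<^sup>2)"
    using hopf_modulus_bound[OF D] by (intro ellipK_ge_pi_half) (auto simp: abs_square_less_1)
  then show ?thesis
    unfolding cross_energy_eq_ellipK[OF D] by (simp add: power2_eq_square)
qed

theorem mainTheorem1:
  shows "(\<forall>D::real. 0 < D \<and> D < 2 \<longrightarrow>
            hopf_integrand D integrable_on ({0..2*pi} \<times> {0..2*pi})
          \<and> - 8 * (D\<^sup>2 - 2) / (D\<^sup>2 - 4)\<^sup>2 < 1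
          \<and> cross_energy D = 16 * pi / (4 - D\<^sup>2) * ellipK (- 8 * (D\<^sup>2 - 2) / (D\<^sup>2 - 4)\<^sup>2))
       \<and> (\<forall>D::real. 0 < D \<and> D < 2 \<longrightarrow> cross_energy (sqrt 2) \<le> cross_energy D)
       \<and> cross_energy (sqrt 2) = 4 * pi\<^sup>2"
  using hopf_integrand_integrable hopf_parameter_less_one cross_energy_closed_form
    cross_energy_sqrt_2 cross_energy_ge_four_pi_sq
  by auto

end
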